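(* Let $\mathbf x_i$ denote $\mathbf m^t_i+\widehat{\nabla}_{\boldsymbol{\theta}} f_{\mathcal{B}_i}(\boldsymbol{\theta})$ for $i=1,\ldots,n$, and suppose $\mathbb{E}\|\mathrm{CLT}^k_i(\mathbf x_j)-\mathbf x_j\|^2\le\gamma_j\,\mathbb{E}\|\mathbf x_j\|^2$ for all $\mathbf x_i,\mathbf x_j$. Assume that gradients at different workers are positively correlated, i.e., there exists a positive constant $\kappa$ such that $\mathbb{E}[\mathbf x^T_i\mathbf x_j]\ge\kappa \|\mathbf x_i\|\|\mathbf x_j\|$ for all $i,j$, and that $\mathbb{E}\|\mathbf x_i\|^2=\mathbb{E}\|\mathbf x_j\|^2$ for all $i,j$. Then, if $\kappa>\big(n\sum^n_{i=1}\gamma_i-1\big)/\big(n(n-1)\big)$, we have $\gamma=\frac{ n\sum^n_{i=1}\gamma_i}{1+\kappa n(n-1)}<1$ such that $\mathbb{E}\|\mathbf y-\mathrm{CLT}^k_i(\mathbf y)\|^2\le\gamma\,\mathbb{E}\|\mathbf y\|^2$, where $\mathbf y=\frac{1}{n}\sum^n_{i=1}\mathbf x_i$.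
   Context: Distributed training with $n\ge 2$ workers minimizes $f(\boldsymbol{\theta})=\frac{1}{n}\sum_{i=1}^n f_i(\boldsymbol{\theta})$, $f_i(\boldsymbol{\theta})=\mathbb{E}_{\xi_i\sim\mathcal{D}}F(\boldsymbol{\theta},\xi_i)$ with identical data distribution $\mathcal{D}$ at all workers. Worker $i$ uses a mini-batch $\mathcal{B}_i$ and stochastic gradient estimate $\widehat{\nabla}_{\boldsymbol{\theta}} f_{\mathcal{B}_i}(\boldsymbol{\theta})=|\mathcal{B}_i|^{-1}\sum_{j\in\mathcal{B}_i}\nabla_{\boldsymbol{\theta}} f_{i,j}(\boldsymbol{\theta})$, and keeps a local memory (gradient residue / error feedback) $\mathbf m^t_i$ at iteration $t$. For a vector $\mathbf x$, $\mathcal{I}^k(\mathbf x)$ denotes the index set of its $k$ largest entries in magnitude. The cyclic local top-$k$ compressor with worker $i$ as leader, $\mathrm{CLT}^k_i:\mathbb{R}^p\to\mathbb{R}^p$, is defined entrywise by $[\mathrm{CLT}^k_i(\mathbf x_j)]_m=(\mathbf x_j)_m$ if $m\in\mathcal{I}^k(\mathbf x_i)$ and $0$ otherwise, i.e., every worker's vector is sparsified using the top-$k$ indices of the leader's vector $\mathbf x_i$; it is linear in its argument for a fixed leader index set (so $\mathrm{CLT}^k_i(\frac1n\sum_j\mathbf x_j)=\frac1n\sum_j\mathrm{CLT}^k_i(\mathbf x_j)$). *)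

theory Defs
  imports "HOL-Probability.Probability"
begin

definition topk_idx :: "nat \<Rightarrow> real^'p::finite \<Rightarrow> 'p set" where
  "topk_idx k x = (SOME S. card S = min k CARD('p) \<and>
      (\<forall>i\<in>S. \<forall>j. j \<notin> S \<longrightarrow> \<bar>x $ j\<bar> \<le> \<bar>x $ i\<bar>))"

definition CLT :: "nat \<Rightarrow> real^'p::finite \<Rightarrow> real^'p \<Rightarrow> real^'p" where
  "CLT k leader v = (\<chi> m. if m \<in> topk_idx k leader then v $ m else 0)"

end

theory Submission
  imports Defs
begin

(* For a fixed leader, CLT is a coordinate projection: linear and norm non-increasing on
   residuals.  So the residual of the average y is the average of the workers' residuals, and
   convexity of the squared norm bounds its second moment by (\<Sum>j. \<gamma>s j) s / n, where s is
   the common second moment of the x j.  Expanding \<parallel>y\<parallel>\<^sup>2 into inner products, the correlation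
   hypothesis gives E \<parallel>y\<parallel>\<^sup>2 \<ge> (1 + (n - 1) \<kappa>) s / n.  Comparing the two bounds yields the factor
   (\<Sum>j. \<gamma>s j) / (1 + (n - 1) \<kappa>), which is at most \<gamma> because
   1 + \<kappa> n (n - 1) \<le> n (1 + (n - 1) \<kappa>); the hypothesis on \<kappa> is exactly \<gamma> < 1. *)

lemma linear_CLT: "linear (CLT k a)"
  by (rule linearI) (auto simp: CLT_def vec_eq_iff)

lemma norm_diff_CLT_le: "norm (v - CLT k a v) \<le> norm v"
  unfolding norm_vec_def by (rule L2_set_mono) (auto simp: CLT_def)

lemma power2_norm_mean_le:
  fixes v :: "'i \<Rightarrow> 'b::real_normed_vector"
  shows "(norm ((1 / real (card A)) *\<^sub>R (\<Sum>j\<in>A. v j)))\<^sup>2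
           \<le> (1 / real (card A)) * (\<Sum>j\<in>A. (norm (v j))\<^sup>2)"
proof -
  have "(norm (\<Sum>j\<in>A. v j))\<^sup>2 \<le> (\<Sum>j\<in>A. norm (v j))\<^sup>2"
    by (simp add: norm_sum power_mono)
  also have "\<dots> \<le> real (card A) * (\<Sum>j\<in>A. (norm (v j))\<^sup>2)"
    using sum_squared_le_sum_of_squares by (simp add: mult.commute)
  finally show ?thesis
    by (cases "card A = 0") (simp_all add: power_mult_distrib power2_eq_square field_simps)
qed

lemma power2_norm_sum_eq_sum_inner:
  fixes v :: "'i \<Rightarrow> 'b::real_inner"
  shows "(norm (\<Sum>j\<in>A. v j))\<^sup>2 = (\<Sum>i\<in>A. \<Sum>j\<in>A. v i \<bullet> v j)"
  unfolding power2_norm_eq_inner inner_sum_left inner_sum_right by (rule sum.swap)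

lemma abs_inner_le_sum_power2_norm:
  fixes a b :: "'b::real_inner"
  shows "\<bar>a \<bullet> b\<bar> \<le> (norm a)\<^sup>2 + (norm b)\<^sup>2"
proof -
  have "\<bar>a \<bullet> b\<bar> \<le> norm a * norm b" by (rule Cauchy_Schwarz_ineq2)
  also have "\<dots> \<le> (norm a)\<^sup>2 + (norm b)\<^sup>2"
    using sum_squares_bound[of "norm a" "norm b"] mult_nonneg_nonneg[OF norm_ge_zero norm_ge_zero, of a b]
    by linarith
  finally show ?thesis .
qed

lemma sum_sum_ge_diagonal_off_diagonal:
  fixes a :: "'i \<Rightarrow> 'i \<Rightarrow> real"
  assumes "finite A"
    and "\<And>i. i \<in> A \<Longrightarrow> a i i = d"
    and "\<And>i j. i \<in> A \<Longrightarrow> j \<in> A \<Longrightarrow> i \<noteq> j \<Longrightarrow> c \<le> a i j"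
  shows "real (card A) * (d + (real (card A) - 1) * c) \<le> (\<Sum>i\<in>A. \<Sum>j\<in>A. a i j)"
proof -
  have "d + (real (card A) - 1) * c \<le> (\<Sum>j\<in>A. a i j)" if "i \<in> A" for i
  proof -
    have "Suc 0 \<le> card A"
      using assms(1) that by (metis Suc_leI card_gt_0_iff empty_iff)
    then have "real (card (A - {i})) = real (card A) - 1"
      using assms(1) that by (simp add: card_Diff_singleton of_nat_diff)
    then have "(real (card A) - 1) * c = (\<Sum>j\<in>A - {i}. c)"
      by simp
    also have "\<dots> \<le> (\<Sum>j\<in>A - {i}. a i j)"
      using assms(3) that by (intro sum_mono) auto
    finally show ?thesis
      using assms(1,2) that by (simp add: sum.remove)
  qed
  then have "(\<Sum>i\<in>A. d + (real (card A) - 1) * c) \<le> (\<Sum>i\<in>A. \<Sum>j\<in>A. a i j)"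
    by (rule sum_mono)
  then show ?thesis by simp
qed

lemma integrable_power2_norm_le:
  fixes X Y :: "'a \<Rightarrow> 'b::real_normed_vector"
  assumes "integrable M (\<lambda>\<omega>. (norm (X \<omega>))\<^sup>2)" and "Y \<in> borel_measurable M"
    and "\<And>\<omega>. norm (Y \<omega>) \<le> norm (X \<omega>)"
  shows "integrable M (\<lambda>\<omega>. (norm (Y \<omega>))\<^sup>2)"
  using assms(2,3) by (intro Bochner_Integration.integrable_bound[OF assms(1)]) (auto intro: power_mono)

lemma integrable_inner_of_square_integrable:
  fixes X Y :: "'a \<Rightarrow> 'b::euclidean_space"
  assumes "X \<in> borel_measurable M" and "Y \<in> borel_measurable M"
    and "integrable M (\<lambda>\<omega>. (norm (X \<omega>))\<^sup>2)" and "integrable M (\<lambda>\<omega>. (norm (Y \<omega>))\<^sup>2)"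
  shows "integrable M (\<lambda>\<omega>. X \<omega> \<bullet> Y \<omega>)"
proof (rule Bochner_Integration.integrable_bound[OF Bochner_Integration.integrable_add[OF assms(3,4)]])
  show "(\<lambda>\<omega>. X \<omega> \<bullet> Y \<omega>) \<in> borel_measurable M"
    using assms(1,2) by (rule borel_measurable_inner)
  show "AE \<omega> in M. norm (X \<omega> \<bullet> Y \<omega>) \<le> norm ((norm (X \<omega>))\<^sup>2 + (norm (Y \<omega>))\<^sup>2)"
    using abs_inner_le_sum_power2_norm by (intro AE_I2) simp
qed

lemma integral_power2_norm_mean_le:
  fixes X :: "'i \<Rightarrow> 'a \<Rightarrow> 'b::real_normed_vector"
  assumes "finite A" and "\<And>j. j \<in> A \<Longrightarrow> integrable M (\<lambda>\<omega>. (norm (X j \<omega>))\<^sup>2)"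
  shows "(\<integral>\<omega>. (norm ((1 / real (card A)) *\<^sub>R (\<Sum>j\<in>A. X j \<omega>)))\<^sup>2 \<partial>M)
           \<le> (1 / real (card A)) * (\<Sum>j\<in>A. \<integral>\<omega>. (norm (X j \<omega>))\<^sup>2 \<partial>M)"
proof -
  have "(\<integral>\<omega>. (norm ((1 / real (card A)) *\<^sub>R (\<Sum>j\<in>A. X j \<omega>)))\<^sup>2 \<partial>M)
          \<le> (\<integral>\<omega>. (1 / real (card A)) * (\<Sum>j\<in>A. (norm (X j \<omega>))\<^sup>2) \<partial>M)"
    using assms(2) by (intro integral_mono' power2_norm_mean_le integrable_mult_right integrable_sum)
      (auto intro!: sum_nonneg divide_nonneg_nonneg)
  also have "\<dots> = (1 / real (card A)) * (\<Sum>j\<in>A. \<integral>\<omega>. (norm (X j \<omega>))\<^sup>2 \<partial>M)"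
    using assms(2) by (simp add: integral_sum)
  finally show ?thesis .
qed

lemma integral_power2_norm_mean_ge:
  fixes X :: "'i \<Rightarrow> 'a \<Rightarrow> 'b::euclidean_space"
  assumes "finite A"
    and "\<And>j. j \<in> A \<Longrightarrow> X j \<in> borel_measurable M"
    and "\<And>j. j \<in> A \<Longrightarrow> integrable M (\<lambda>\<omega>. (norm (X j \<omega>))\<^sup>2)"
    and "\<And>j. j \<in> A \<Longrightarrow> (\<integral>\<omega>. (norm (X j \<omega>))\<^sup>2 \<partial>M) = s"
    and "\<And>i j. i \<in> A \<Longrightarrow> j \<in> A \<Longrightarrow> i \<noteq> j \<Longrightarrow> c \<le> (\<integral>\<omega>. X i \<omega> \<bullet> X j \<omega> \<partial>M)"
  shows "(s + (real (card A) - 1) * c) / real (card A)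
           \<le> (\<integral>\<omega>. (norm ((1 / real (card A)) *\<^sub>R (\<Sum>j\<in>A. X j \<omega>)))\<^sup>2 \<partial>M)"
proof -
  define m where "m = real (card A)"
  have integrable_inner: "integrable M (\<lambda>\<omega>. X i \<omega> \<bullet> X j \<omega>)" if "i \<in> A" "j \<in> A" for i j
    using assms(2,3) that by (blast intro: integrable_inner_of_square_integrable)
  have mean_norm: "(norm ((1 / m) *\<^sub>R (\<Sum>j\<in>A. X j \<omega>)))\<^sup>2
                    = (1 / m)\<^sup>2 * (\<Sum>i\<in>A. \<Sum>j\<in>A. X i \<omega> \<bullet> X j \<omega>)" for \<omega>
    by (simp only: norm_scaleR power_mult_distrib power2_abs power2_norm_sum_eq_sum_inner)
  have "(s + (m - 1) * c) / m = (1 / m)\<^sup>2 * (m * (s + (m - 1) * c))"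
    by (cases "m = 0") (simp_all add: power2_eq_square)
  also have "\<dots> \<le> (1 / m)\<^sup>2 * (\<Sum>i\<in>A. \<Sum>j\<in>A. \<integral>\<omega>. X i \<omega> \<bullet> X j \<omega> \<partial>M)"
    unfolding m_def using assms(1,4,5)
    by (intro mult_left_mono sum_sum_ge_diagonal_off_diagonal) (auto simp: power2_norm_eq_inner)
  also have "\<dots> = (\<integral>\<omega>. (1 / m)\<^sup>2 * (\<Sum>i\<in>A. \<Sum>j\<in>A. X i \<omega> \<bullet> X j \<omega>) \<partial>M)"
    using integrable_inner by (simp add: integral_sum Bochner_Integration.integrable_sum)
  also have "\<dots> = (\<integral>\<omega>. (norm ((1 / m) *\<^sub>R (\<Sum>j\<in>A. X j \<omega>)))\<^sup>2 \<partial>M)"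
    by (simp only: mean_norm)
  finally show ?thesis unfolding m_def .
qed

lemma integral_power2_norm_CLT_residual_mean_le:
  fixes X :: "'i \<Rightarrow> 'a \<Rightarrow> real^'p::finite"
  assumes "finite A"
    and "\<And>j. j \<in> A \<Longrightarrow> X j \<in> borel_measurable M"
    and "\<And>j. j \<in> A \<Longrightarrow> integrable M (\<lambda>\<omega>. (norm (X j \<omega>))\<^sup>2)"
    and "\<And>j. j \<in> A \<Longrightarrow> (\<lambda>\<omega>. CLT k (L \<omega>) (X j \<omega>)) \<in> borel_measurable M"
  shows "(\<integral>\<omega>. (norm ((1 / real (card A)) *\<^sub>R (\<Sum>j\<in>A. X j \<omega>)
                    - CLT k (L \<omega>) ((1 / real (card A)) *\<^sub>R (\<Sum>j\<in>A. X j \<omega>))))\<^sup>2 \<partial>M)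
           \<le> (1 / real (card A)) * (\<Sum>j\<in>A. \<integral>\<omega>. (norm (CLT k (L \<omega>) (X j \<omega>) - X j \<omega>))\<^sup>2 \<partial>M)"
proof -
  have "integrable M (\<lambda>\<omega>. (norm (X j \<omega> - CLT k (L \<omega>) (X j \<omega>)))\<^sup>2)" if "j \<in> A" for j
    by (rule integrable_power2_norm_le[OF assms(3)[OF that]
          borel_measurable_diff[OF assms(2,4)[OF that]] norm_diff_CLT_le])
  then show ?thesis
    using integral_power2_norm_mean_le[of A M "\<lambda>j \<omega>. X j \<omega> - CLT k (L \<omega>) (X j \<omega>)"] assms(1)
    by (simp add: linear_sum[OF linear_CLT] linear_scale[OF linear_CLT] sum_subtractf
        scaleR_right_diff_distrib norm_minus_commute)
qed

lemma le_mult_correlation_factor: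
  fixes e s Y S N \<kappa> :: real
  assumes N: "1 \<le> N" and \<kappa>: "0 \<le> \<kappa>" and s: "0 \<le> s" and e: "0 \<le> e"
    and error: "e \<le> S * s / N"
    and lower: "(s + (N - 1) * (\<kappa> * s)) / N \<le> Y" and upper: "Y \<le> s"
  shows "e \<le> N * S / (1 + \<kappa> * N * (N - 1)) * Y"
proof (cases "s = 0")
  case True
  then show ?thesis
    using N \<kappa> e error lower upper by simp
next
  case False
  define D where "D = 1 + \<kappa> * N * (N - 1)"
  have "0 \<le> S * s / N"
    using e error by linarith
  then have "0 \<le> S * s"
    using N by (simp add: zero_le_divide_iff)
  then have S: "0 \<le> S"
    using s False by (simp add: zero_le_mult_iff)
  have "0 \<le> \<kappa> * N * (N - 1)"
    using N \<kappa> by simp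
  then have D: "0 < D" "D \<le> N * (1 + (N - 1) * \<kappa>)"
    using N unfolding D_def by (linarith, simp add: algebra_simps)
  have "e \<le> S * s / N" by (fact error)
  also have "\<dots> \<le> S * s * (1 + (N - 1) * \<kappa>) / D"
  proof -
    have "S * s * D \<le> S * s * (N * (1 + (N - 1) * \<kappa>))"
      using D(2) S s by (intro mult_left_mono) simp_all
    then show ?thesis
      using D(1) N by (simp add: field_simps)
  qed
  also have "\<dots> = N * S / D * ((s + (N - 1) * (\<kappa> * s)) / N)"
    using N D by (simp add: field_simps)
  also have "\<dots> \<le> N * S / D * Y"
    using lower N S D by (intro mult_left_mono) simp_all
  finally show ?thesis unfolding D_def .
qed

theorem lemma2:
  fixes M :: "'a measure"
    and x :: "nat \<Rightarrow> 'a \<Rightarrow> real^'p::finite"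
    and n k l :: nat
    and \<gamma>s :: "nat \<Rightarrow> real"
    and \<kappa> :: real
  assumes "prob_space M"
    and n2: "n \<ge> 2"
    and leader: "l \<in> {1..n}"
    and meas: "\<And>j. j \<in> {1..n} \<Longrightarrow> x j \<in> borel_measurable M"
    and sqint: "\<And>j. j \<in> {1..n} \<Longrightarrow> integrable M (\<lambda>\<omega>. (norm (x j \<omega>))\<^sup>2)"
    and meas_clt: "\<And>j. j \<in> {1..n} \<Longrightarrow> (\<lambda>\<omega>. CLT k (x l \<omega>) (x j \<omega>)) \<in> borel_measurable M"
    and compr: "\<And>j. j \<in> {1..n} \<Longrightarrow>
        (\<integral>\<omega>. (norm (CLT k (x l \<omega>) (x j \<omega>) - x j \<omega>))\<^sup>2 \<partial>M)
          \<le> \<gamma>s j * (\<integral>\<omega>. (norm (x j \<omega>))\<^sup>2 \<partial>M)"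
    and kpos: "\<kappa> > 0"
    and corr: "\<And>i j. i \<in> {1..n} \<Longrightarrow> j \<in> {1..n} \<Longrightarrow>
        (\<integral>\<omega>. x i \<omega> \<bullet> x j \<omega> \<partial>M)
          \<ge> \<kappa> * sqrt (\<integral>\<omega>. (norm (x i \<omega>))\<^sup>2 \<partial>M) * sqrt (\<integral>\<omega>. (norm (x j \<omega>))\<^sup>2 \<partial>M)"
    and eqmom: "\<And>i j. i \<in> {1..n} \<Longrightarrow> j \<in> {1..n} \<Longrightarrow>
        (\<integral>\<omega>. (norm (x i \<omega>))\<^sup>2 \<partial>M) = (\<integral>\<omega>. (norm (x j \<omega>))\<^sup>2 \<partial>M)"
    and kbig: "\<kappa> > (real n * (\<Sum>i=1..n. \<gamma>s i) - 1) / (real n * (real n - 1))"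
  shows "let \<gamma> = real n * (\<Sum>i=1..n. \<gamma>s i) / (1 + \<kappa> * real n * (real n - 1));
             y = (\<lambda>\<omega>. (1 / real n) *\<^sub>R (\<Sum>i=1..n. x i \<omega>))
         in \<gamma> < 1 \<and>
            (\<integral>\<omega>. (norm (y \<omega> - CLT k (x l \<omega>) (y \<omega>)))\<^sup>2 \<partial>M)
              \<le> \<gamma> * (\<integral>\<omega>. (norm (y \<omega>))\<^sup>2 \<partial>M)"
proof -
  define s where "s = (\<integral>\<omega>. (norm (x l \<omega>))\<^sup>2 \<partial>M)"
  define y where "y = (\<lambda>\<omega>. (1 / real n) *\<^sub>R (\<Sum>i=1..n. x i \<omega>))"
  define \<gamma> where "\<gamma> = real n * (\<Sum>i=1..n. \<gamma>s i) / (1 + \<kappa> * real n * (real n - 1))"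
  have s: "0 \<le> s"
    unfolding s_def by (rule integral_nonneg_AE) simp
  have moment: "\<And>j. j \<in> {1..n} \<Longrightarrow> (\<integral>\<omega>. (norm (x j \<omega>))\<^sup>2 \<partial>M) = s"
    using eqmom leader unfolding s_def by blast
  have "(\<integral>\<omega>. (norm (y \<omega> - CLT k (x l \<omega>) (y \<omega>)))\<^sup>2 \<partial>M)
      \<le> (1 / real n) * (\<Sum>j=1..n. \<integral>\<omega>. (norm (CLT k (x l \<omega>) (x j \<omega>) - x j \<omega>))\<^sup>2 \<partial>M)"
    using integral_power2_norm_CLT_residual_mean_le[of "{1..n}" x M k "x l"] meas sqint meas_clt
    unfolding y_def by simp
  also have "\<dots> \<le> (1 / real n) * (\<Sum>j=1..n. \<gamma>s j * s)"
    using compr moment by (intro mult_left_mono sum_mono) auto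
  finally have error: "(\<integral>\<omega>. (norm (y \<omega> - CLT k (x l \<omega>) (y \<omega>)))\<^sup>2 \<partial>M)
      \<le> (\<Sum>j=1..n. \<gamma>s j) * s / real n"
    by (simp add: sum_distrib_right)
  have upper: "(\<integral>\<omega>. (norm (y \<omega>))\<^sup>2 \<partial>M) \<le> s"
    using integral_power2_norm_mean_le[of "{1..n}" M x] sqint moment n2 by (simp add: y_def)
  have "\<kappa> * s \<le> (\<integral>\<omega>. x i \<omega> \<bullet> x j \<omega> \<partial>M)" if "i \<in> {1..n}" "j \<in> {1..n}" for i j
    using corr[OF that] moment[OF that(1)] moment[OF that(2)] s by (simp add: mult.assoc)
  then have lower: "(s + (real n - 1) * (\<kappa> * s)) / real n \<le> (\<integral>\<omega>. (norm (y \<omega>))\<^sup>2 \<partial>M)"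
    using integral_power2_norm_mean_ge[of "{1..n}" x M s "\<kappa> * s"] meas sqint moment
    unfolding y_def by simp
  have "0 < \<kappa> * real n * (real n - 1)"
    using kpos n2 by simp
  moreover have "real n * (\<Sum>i=1..n. \<gamma>s i) < 1 + \<kappa> * real n * (real n - 1)"
    using kbig n2 by (simp add: pos_divide_less_eq algebra_simps)
  ultimately have "\<gamma> < 1"
    unfolding \<gamma>_def by simp
  moreover have "(\<integral>\<omega>. (norm (y \<omega> - CLT k (x l \<omega>) (y \<omega>)))\<^sup>2 \<partial>M) \<le> \<gamma> * (\<integral>\<omega>. (norm (y \<omega>))\<^sup>2 \<partial>M)"
    unfolding \<gamma>_def using n2 kpos s error lower upper
    by (intro le_mult_correlation_factor) simp_all
  ultimately show ?thesis
    unfolding Let_def y_def \<gamma>_def by (rule conjI)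
qed

end
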